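(* Let $G$ be a connected graph containing a longest path $L=x_0x_1\ldots x_p$ with $p\ge 2$, and a path $P=y_0y_1\ldots y_s$ with $s\ge p-2$. Then $|V(L)\cap V(P)|\ge 1$, unless $p$ is even, $s=p-2$, and $x_{p/2}y_{s/2}$ is a cut-edge of $G$.
   Context: All graphs are finite, simple and undirected. The length of a path is its number of edges; a longest path is one of maximum length in $G$. A cut-edge is an edge whose removal disconnects the graph. *)

theory Defs
  imports Main
begin

definition simple_graph :: "'a set \<Rightarrow> 'a set set \<Rightarrow> bool" where
  "simple_graph V E \<longleftrightarrow> finite V \<and> (\<forall>e\<in>E. \<exists>u v. e = {u, v} \<and> u \<noteq> v \<and> u \<in> V \<and> v \<in> V)"

text \<open>A path is a nonempty list of distinct vertices, consecutive ones adjacent.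
  Its length (number of edges) is length xs - 1.\<close>
definition is_path :: "'a set \<Rightarrow> 'a set set \<Rightarrow> 'a list \<Rightarrow> bool" where
  "is_path V E xs \<longleftrightarrow> xs \<noteq> [] \<and> distinct xs \<and> set xs \<subseteq> V \<and>
     (\<forall>i. Suc i < length xs \<longrightarrow> {xs ! i, xs ! Suc i} \<in> E)"

definition longest_path :: "'a set \<Rightarrow> 'a set set \<Rightarrow> 'a list \<Rightarrow> bool" where
  "longest_path V E xs \<longleftrightarrow> is_path V E xs \<and> (\<forall>ys. is_path V E ys \<longrightarrow> length ys \<le> length xs)"

definition graph_connected :: "'a set \<Rightarrow> 'a set set \<Rightarrow> bool" where
  "graph_connected V E \<longleftrightarrow>
     (\<forall>u\<in>V. \<forall>v\<in>V. \<exists>xs. is_path V E xs \<and> hd xs = u \<and> last xs = v)"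

definition cut_edge :: "'a set \<Rightarrow> 'a set set \<Rightarrow> 'a set \<Rightarrow> bool" where
  "cut_edge V E e \<longleftrightarrow> e \<in> E \<and> graph_connected V E \<and> \<not> graph_connected V (E - {e})"

end

theory Submission
  imports Defs
begin

text \<open>Suppose P misses L. Since G is connected there is a path Q from a vertex x of L to a
  vertex y of P meeting L only in x and P only in y. Either arm of L ending in x, followed by Q
  and then by either arm of P starting in y, is a path, hence has at most p + 1 vertices.
  Adding the bounds for two opposite choices of arms gives p + s + 2|Q| \<le> 2p + 2, where Q has
  |Q| \<ge> 2 vertices; so s = p - 2, Q is the single edge xy, all four bounds are tight, and x, y
  are the midpoints of L and P. This argument only uses connectivity, and in G - xy both L and P
  survive with L still longest, so G - xy is disconnected.\<close>

definition path_or_nil :: "'a set \<Rightarrow> 'a set set \<Rightarrow> 'a list \<Rightarrow> bool" where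
  "path_or_nil V E xs \<longleftrightarrow> distinct xs \<and> set xs \<subseteq> V \<and> successively (\<lambda>a b. {a, b} \<in> E) xs"

lemma is_path_iff: "is_path V E xs \<longleftrightarrow> xs \<noteq> [] \<and> path_or_nil V E xs"
  unfolding is_path_def path_or_nil_def successively_conv_nth by blast

lemma path_or_nil_append:
  "path_or_nil V E (xs @ ys) \<longleftrightarrow> path_or_nil V E xs \<and> path_or_nil V E ys \<and> set xs \<inter> set ys = {}
     \<and> (xs = [] \<or> ys = [] \<or> {last xs, hd ys} \<in> E)"
  unfolding path_or_nil_def successively_append_iff by auto

lemma path_or_nil_rev: "path_or_nil V E (rev xs) \<longleftrightarrow> path_or_nil V E xs"
  unfolding path_or_nil_def successively_rev by (simp add: insert_commute)

lemma path_or_nil_splice: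
  assumes "path_or_nil V E (A @ [x])" "path_or_nil V E (y # B)"
    and "path_or_nil V E Q" "Q \<noteq> []" "hd Q = x" "last Q = y"
    and "set A \<inter> set Q = {}" "set B \<inter> set Q = {}" "set A \<inter> set B = {}"
  shows "path_or_nil V E (A @ Q @ B)"
proof -
  have "path_or_nil V E A" "A = [] \<or> {last A, x} \<in> E"
    using assms(1) path_or_nil_append[of V E A "[x]"] by auto
  moreover have "path_or_nil V E B" "B = [] \<or> {y, hd B} \<in> E"
    using assms(2) path_or_nil_append[of V E "[y]" B] by auto
  moreover have "path_or_nil V E (Q @ B)"
    using assms path_or_nil_append[of V E Q B] calculation by auto
  ultimately show ?thesis using assms path_or_nil_append[of V E A "Q @ B"] by auto
qed

lemma list_segment_between:
  assumes "xs \<noteq> []" "hd xs \<in> S" "last xs \<in> T" "S \<inter> T = {}"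
  obtains us Q ws where "xs = us @ Q @ ws" "Q \<noteq> []" "hd Q \<in> S" "last Q \<in> T"
    "set Q \<inter> S = {hd Q}" "set Q \<inter> T = {last Q}"
proof -
  obtain us a ws where xs: "xs = us @ a # ws" "a \<in> S" "\<forall>z \<in> set ws. z \<notin> S"
    using split_list_last_propE[of xs "\<lambda>z. z \<in> S"] assms(1,2) hd_in_set by metis
  have "last (a # ws) \<in> T" using xs(1) assms(3) by simp
  then obtain vs b zs where aws: "a # ws = vs @ b # zs" "b \<in> T" "\<forall>z \<in> set vs. z \<notin> T"
    using split_list_first_propE[of "a # ws" "\<lambda>z. z \<in> T"] last_in_set by blast
  obtain vs' where vs: "vs = a # vs'"
    using aws(1,2) xs(2) assms(4) by (cases vs) auto
  have "set vs' \<subseteq> set ws" "b \<in> set ws" using aws(1) unfolding vs by auto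
  then have "set (a # vs' @ [b]) \<inter> S = {a}" using xs(2,3) by auto
  moreover have "set (a # vs' @ [b]) \<inter> T = {b}" using aws(2,3) unfolding vs by auto
  ultimately show ?thesis
    using that[of us "a # vs' @ [b]" zs] xs(1,2) aws(1,2) unfolding vs by simp
qed

lemma graph_connected_obtain_path_between:
  assumes "graph_connected V E" "S \<subseteq> V" "T \<subseteq> V" "S \<noteq> {}" "T \<noteq> {}" "S \<inter> T = {}"
  obtains Q where "Q \<noteq> []" "path_or_nil V E Q" "hd Q \<in> S" "last Q \<in> T"
    "set Q \<inter> S = {hd Q}" "set Q \<inter> T = {last Q}"
proof -
  obtain u v where "u \<in> S" "v \<in> T" using assms(4,5) by blast
  then obtain R where R: "is_path V E R" "hd R = u" "last R = v"
    using assms(1-3) unfolding graph_connected_def by blast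
  then obtain us Q ws where "R = us @ Q @ ws" "Q \<noteq> []" "hd Q \<in> S" "last Q \<in> T"
    "set Q \<inter> S = {hd Q}" "set Q \<inter> T = {last Q}"
    using list_segment_between[of R S T] \<open>u \<in> S\<close> \<open>v \<in> T\<close> assms(6) is_path_iff by metis
  moreover have "path_or_nil V E Q"
    using R(1) calculation(1) is_path_iff path_or_nil_append by metis
  ultimately show ?thesis using that by blast
qed

lemma longest_path_bridge_bound:
  assumes "longest_path V E L" "set L \<inter> set P = {}"
    and "path_or_nil V E Q" "Q \<noteq> []" "set Q \<inter> set L = {hd Q}" "set Q \<inter> set P = {last Q}"
    and "path_or_nil V E (A @ [hd Q])" "set A \<subseteq> set L - {hd Q}"
    and "path_or_nil V E (last Q # B)" "set B \<subseteq> set P - {last Q}"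
  shows "length A + length Q + length B \<le> length L"
proof -
  have "set A \<inter> set Q = {}" "set B \<inter> set Q = {}" "set A \<inter> set B = {}"
    using assms(2,5,6,8,10) by blast+
  then have "is_path V E (A @ Q @ B)"
    using path_or_nil_splice[OF assms(7,9,3,4)] \<open>Q \<noteq> []\<close> by (simp add: is_path_iff)
  then show ?thesis using assms(1) unfolding longest_path_def by fastforce
qed

lemma path_or_nil_split_at:
  assumes "path_or_nil V E xs" "x \<in> set xs"
  obtains ys zs where "xs = ys @ x # zs" "set ys \<subseteq> set xs - {x}" "set zs \<subseteq> set xs - {x}"
    "path_or_nil V E (ys @ [x])" "path_or_nil V E (x # zs)"
proof -
  obtain ys zs where xs: "xs = ys @ x # zs" using assms(2) split_list by metis
  moreover have "distinct xs" using assms(1) unfolding path_or_nil_def by blast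
  moreover have "path_or_nil V E (ys @ [x])" "path_or_nil V E (x # zs)"
    using assms(1) path_or_nil_append[of V E ys "x # zs"] path_or_nil_append[of V E "ys @ [x]" zs]
    unfolding xs by auto
  ultimately show ?thesis using that by auto
qed

lemma longest_path_disjoint_path_middle_edge:
  assumes "graph_connected V E" "longest_path V E L" "length L = p + 1"
    and "is_path V E P" "length P = s + 1" "s + 2 \<ge> p"
    and "set L \<inter> set P = {}"
  shows "even p \<and> s + 2 = p \<and> {L ! (p div 2), P ! (s div 2)} \<in> E"
proof -
  have L: "is_path V E L" using assms(2) unfolding longest_path_def by blast
  have pL: "path_or_nil V E L" and pP: "path_or_nil V E P"
    using L assms(4) is_path_iff by auto
  obtain Q where Q: "Q \<noteq> []" "path_or_nil V E Q" "hd Q \<in> set L" "last Q \<in> set P"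
    "set Q \<inter> set L = {hd Q}" "set Q \<inter> set P = {last Q}"
    using graph_connected_obtain_path_between[OF assms(1), of "set L" "set P"] L assms(4,7)
    unfolding is_path_def by auto
  define x y where "x = hd Q" and "y = last Q"
  obtain L1 L2 where L12: "L = L1 @ x # L2" "set L1 \<subseteq> set L - {x}" "set L2 \<subseteq> set L - {x}"
    "path_or_nil V E (L1 @ [x])" "path_or_nil V E (x # L2)"
    using path_or_nil_split_at[OF pL] Q(3) x_def by metis
  obtain P1 P2 where P12: "P = P1 @ y # P2" "set P1 \<subseteq> set P - {y}" "set P2 \<subseteq> set P - {y}"
    "path_or_nil V E (P1 @ [y])" "path_or_nil V E (y # P2)"
    using path_or_nil_split_at[OF pP] Q(4) y_def by metis
  have reversed_arms: "path_or_nil V E (rev L2 @ [x])" "path_or_nil V E (y # rev P1)"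
    using L12(5) P12(4) path_or_nil_rev[of V E "x # L2"] path_or_nil_rev[of V E "P1 @ [y]"] by auto
  have "length Q \<noteq> 1"
    using Q assms(7) x_def y_def by (cases Q) auto
  then have Q2: "length Q \<ge> 2" using Q(1) by (cases Q) (auto simp: Suc_le_eq)
  note bound = longest_path_bridge_bound[OF assms(2,7) Q(2,1,5,6), folded x_def y_def,
      unfolded assms(3)]
  have "length L1 + length Q + length P2 \<le> p + 1"
    using bound[OF L12(4,2) P12(5,3)] .
  moreover have "length L1 + length Q + length P1 \<le> p + 1"
    using bound[OF L12(4,2) reversed_arms(2)] P12(2) by simp
  moreover have "length L2 + length Q + length P2 \<le> p + 1"
    using bound[OF reversed_arms(1) _ P12(5,3)] L12(3) by simp
  moreover have "length L2 + length Q + length P1 \<le> p + 1"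
    using bound[OF reversed_arms(1) _ reversed_arms(2)] L12(3) P12(2) by simp
  moreover have "length L1 + length L2 = p" "length P1 + length P2 = s"
    using assms(3,5) L12(1) P12(1) by auto
  ultimately have "s + 2 = p" "length Q = 2" "s = 2 * length P1" "length L1 = length P1 + 1"
    using Q2 assms(6) by linarith+
  then have "even p" "length L1 = p div 2" "length P1 = s div 2" by auto
  obtain a b where "Q = [a, b]"
    using \<open>length Q = 2\<close> by (metis One_nat_def Suc_1 length_0_conv length_Suc_conv)
  then have "{x, y} \<in> E" using Q(2) x_def y_def by (simp add: path_or_nil_def)
  moreover have "L ! (p div 2) = x" "P ! (s div 2) = y"
    using L12(1) P12(1) \<open>length L1 = p div 2\<close> \<open>length P1 = s div 2\<close> nth_append_length by metis+
  ultimately show ?thesis using \<open>even p\<close> \<open>s + 2 = p\<close> by simp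
qed

lemma is_path_remove_edge:
  assumes "is_path V E xs" "z \<in> e" "z \<notin> set xs"
  shows "is_path V (E - {e}) xs"
  unfolding is_path_def
proof (intro conjI allI impI)
  show "xs \<noteq> []" "distinct xs" "set xs \<subseteq> V" using assms(1) unfolding is_path_def by auto
  fix i assume i: "Suc i < length xs"
  then have "{xs ! i, xs ! Suc i} \<noteq> e" using assms(2,3) by auto
  then show "{xs ! i, xs ! Suc i} \<in> E - {e}" using assms(1) i unfolding is_path_def by blast
qed

lemma longest_path_remove_edge:
  assumes "longest_path V E L" "is_path V (E - {e}) L"
  shows "longest_path V (E - {e}) L"
  using assms unfolding longest_path_def is_path_def by blast

theorem lemma2:
  fixes V :: "'a set" and E :: "'a set set" and L P :: "'a list" and p s :: nat
  assumes "simple_graph V E"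
    and "graph_connected V E"
    and "longest_path V E L" and "length L = p + 1" and "p \<ge> 2"
    and "is_path V E P" and "length P = s + 1" and "s + 2 \<ge> p"
  shows "card (set L \<inter> set P) \<ge> 1 \<or>
         (even p \<and> s + 2 = p \<and> cut_edge V E {L ! (p div 2), P ! (s div 2)})"
proof (cases "set L \<inter> set P = {}")
  case False
  then show ?thesis by (simp add: Suc_le_eq card_gt_0_iff)
next
  case disjoint: True
  define x y where "x = L ! (p div 2)" and "y = P ! (s div 2)"
  have xy: "even p" "s + 2 = p" "{x, y} \<in> E"
    using longest_path_disjoint_path_middle_edge[OF assms(2-4,6-8) disjoint] x_def y_def by auto
  have "x \<in> set L" "y \<in> set P"
    unfolding x_def y_def using assms(4,7) by (auto intro!: nth_mem)
  then have "x \<notin> set P" "y \<notin> set L" using disjoint by auto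
  then have "is_path V (E - {{x, y}}) L" "is_path V (E - {{x, y}}) P"
    using is_path_remove_edge[of V E _ y] is_path_remove_edge[of V E _ x] assms(3,6)
    unfolding longest_path_def by auto
  then have "\<not> graph_connected V (E - {{x, y}})"
    using longest_path_disjoint_path_middle_edge[of V "E - {{x, y}}" L p P s]
      longest_path_remove_edge assms(3,4,7,8) disjoint x_def y_def by auto
  then show ?thesis using xy assms(2) x_def y_def unfolding cut_edge_def by blast
qed

end
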